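(* Let $(\mathcal{P},\cdot)$ be an admissible Poisson algebra and $\varphi:\mathcal{P}\times\mathcal{P}\to\mathcal{P}$ bilinear with symmetric part $\varphi_s$ and skew-symmetric part $\varphi_a$. If $\delta^2_{\mathcal{P}}\varphi=0$, then $\delta_H\varphi_s=0$ (a Harrison $2$-cocycle of $\mathcal{A}_{\mathcal{P}}$) and $\delta_C\varphi_a=0$ (a Chevalley $2$-cocycle of $\mathfrak{g}_{\mathcal{P}}$).
   Context: $\mathbb{K}$ is a field of characteristic different from $2$ and $3$. Associator: $A(X,Y,Z)=(X\cdot Y)\cdot Z-X\cdot(Y\cdot Z)$. An admissible Poisson algebra is a $\mathbb{K}$-vector space $\mathcal{P}$ with a bilinear product $\cdot$ satisfying $3A(X,Y,Z)=(X\cdot Z)\cdot Y+(Y\cdot Z)\cdot X-(Y\cdot X)\cdot Z-(Z\cdot X)\cdot Y$; $\{X,Y\}=\frac12(X\cdot Y-Y\cdot X)$, $X\bullet Y=\frac12(X\cdot Y+Y\cdot X)$, $\mathfrak{g}_{\mathcal{P}}=(\mathcal{P},\{\,,\,\})$, $\mathcal{A}_{\mathcal{P}}=(\mathcal{P},\bullet)$. $\varphi_a(X,Y)=\frac12(\varphi(X,Y)-\varphi(Y,X))$, $\varphi_s(X,Y)=\frac12(\varphi(X,Y)+\varphi(Y,X))$. For a bilinear $\varphi$: $\delta^2_{\mathcal{P}}\varphi(X,Y,Z)=3\varphi(X\cdot Y,Z)-3\varphi(X,Y\cdot Z)-\varphi(X\cdot Z,Y)-\varphi(Y\cdot Z,X)+\varphi(Y\cdot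 X,Z)+\varphi(Z\cdot X,Y)+3\varphi(X,Y)\cdot Z-3X\cdot\varphi(Y,Z)-\varphi(X,Z)\cdot Y-\varphi(Y,Z)\cdot X+\varphi(Y,X)\cdot Z+\varphi(Z,X)\cdot Y$. For $\psi$ bilinear: $\delta_C\psi(X,Y,Z)=\{\psi(X,Y),Z\}+\{\psi(Y,Z),X\}+\{\psi(Z,X),Y\}+\psi(\{X,Y\},Z)+\psi(\{Y,Z\},X)+\psi(\{Z,X\},Y)$ and $\delta_H\psi(X,Y,Z)=\psi(X,Y)\bullet Z-X\bullet\psi(Y,Z)+\psi(X\bullet Y,Z)-\psi(X,Y\bullet Z)$. *)

theory Defs
  imports Complex_Main
begin

text \<open>A vector space over a field 'k is given by a scalar multiplication
  sc :: 'k \<Rightarrow> 'v \<Rightarrow> 'v satisfying the locale vector_space sc.\<close>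

definition bilinear_map :: "('k::field \<Rightarrow> 'v::ab_group_add \<Rightarrow> 'v) \<Rightarrow> ('v \<Rightarrow> 'v \<Rightarrow> 'v) \<Rightarrow> bool" where
  "bilinear_map sc f \<longleftrightarrow>
     (\<forall>x. Vector_Spaces.linear sc sc (f x)) \<and> (\<forall>y. Vector_Spaces.linear sc sc (\<lambda>x. f x y))"

definition assoc :: "('v::ab_group_add \<Rightarrow> 'v \<Rightarrow> 'v) \<Rightarrow> 'v \<Rightarrow> 'v \<Rightarrow> 'v \<Rightarrow> 'v" where
  "assoc m X Y Z = m (m X Y) Z - m X (m Y Z)"

definition admissible_poisson :: "('k::field \<Rightarrow> 'v::ab_group_add \<Rightarrow> 'v) \<Rightarrow> ('v \<Rightarrow> 'v \<Rightarrow> 'v) \<Rightarrow> bool" where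
  "admissible_poisson sc m \<longleftrightarrow> bilinear_map sc m \<and>
     (\<forall>X Y Z. sc 3 (assoc m X Y Z) = m (m X Z) Y + m (m Y Z) X - m (m Y X) Z - m (m Z X) Y)"

definition pbracket :: "('k::field \<Rightarrow> 'v::ab_group_add \<Rightarrow> 'v) \<Rightarrow> ('v \<Rightarrow> 'v \<Rightarrow> 'v) \<Rightarrow> 'v \<Rightarrow> 'v \<Rightarrow> 'v" where
  "pbracket sc m X Y = sc (1/2) (m X Y - m Y X)"

definition pjordan :: "('k::field \<Rightarrow> 'v::ab_group_add \<Rightarrow> 'v) \<Rightarrow> ('v \<Rightarrow> 'v \<Rightarrow> 'v) \<Rightarrow> 'v \<Rightarrow> 'v \<Rightarrow> 'v" where
  "pjordan sc m X Y = sc (1/2) (m X Y + m Y X)"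

definition skew_part :: "('k::field \<Rightarrow> 'v::ab_group_add \<Rightarrow> 'v) \<Rightarrow> ('v \<Rightarrow> 'v \<Rightarrow> 'v) \<Rightarrow> 'v \<Rightarrow> 'v \<Rightarrow> 'v" where
  "skew_part sc \<phi> X Y = sc (1/2) (\<phi> X Y - \<phi> Y X)"

definition sym_part :: "('k::field \<Rightarrow> 'v::ab_group_add \<Rightarrow> 'v) \<Rightarrow> ('v \<Rightarrow> 'v \<Rightarrow> 'v) \<Rightarrow> 'v \<Rightarrow> 'v \<Rightarrow> 'v" where
  "sym_part sc \<phi> X Y = sc (1/2) (\<phi> X Y + \<phi> Y X)"

definition delta2P :: "('k::field \<Rightarrow> 'v::ab_group_add \<Rightarrow> 'v) \<Rightarrow> ('v \<Rightarrow> 'v \<Rightarrow> 'v) \<Rightarrow> ('v \<Rightarrow> 'v \<Rightarrow> 'v) \<Rightarrow> 'v \<Rightarrow> 'v \<Rightarrow> 'v \<Rightarrow> 'v" where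
  "delta2P sc m \<phi> X Y Z =
     sc 3 (\<phi> (m X Y) Z) - sc 3 (\<phi> X (m Y Z)) - \<phi> (m X Z) Y - \<phi> (m Y Z) X
     + \<phi> (m Y X) Z + \<phi> (m Z X) Y
     + sc 3 (m (\<phi> X Y) Z) - sc 3 (m X (\<phi> Y Z)) - m (\<phi> X Z) Y - m (\<phi> Y Z) X
     + m (\<phi> Y X) Z + m (\<phi> Z X) Y"

definition deltaC :: "('v::ab_group_add \<Rightarrow> 'v \<Rightarrow> 'v) \<Rightarrow> ('v \<Rightarrow> 'v \<Rightarrow> 'v) \<Rightarrow> 'v \<Rightarrow> 'v \<Rightarrow> 'v \<Rightarrow> 'v" where
  "deltaC br \<psi> X Y Z =
     br (\<psi> X Y) Z + br (\<psi> Y Z) X + br (\<psi> Z X) Y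
     + \<psi> (br X Y) Z + \<psi> (br Y Z) X + \<psi> (br Z X) Y"

definition deltaH :: "('v::ab_group_add \<Rightarrow> 'v \<Rightarrow> 'v) \<Rightarrow> ('v \<Rightarrow> 'v \<Rightarrow> 'v) \<Rightarrow> 'v \<Rightarrow> 'v \<Rightarrow> 'v \<Rightarrow> 'v" where
  "deltaH p \<psi> X Y Z = p (\<psi> X Y) Z - p X (\<psi> Y Z) + \<psi> (p X Y) Z - \<psi> X (p Y Z)"

end

theory Submission
  imports Defs
begin

text \<open>Polarising the cocycle condition \<open>\<delta>\<^sup>2\<^sub>P \<phi> = 0\<close> over the permutations of its arguments
  isolates the two halves of \<open>\<phi>\<close>: twelve times the Harrison coboundary of \<open>\<phi>\<^sub>s\<close> and twelve
  times the Chevalley coboundary of \<open>\<phi>\<^sub>a\<close> are signed sums of values of \<open>\<delta>\<^sup>2\<^sub>P \<phi>\<close>.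
  Both identities hold for an arbitrary bilinear product, so of admissibility only the
  bilinearity of the product is used; dividing by \<open>12\<close> needs characteristic not \<open>2\<close>, \<open>3\<close>.\<close>

lemma bilinear_map_distribs:
  assumes "bilinear_map sc f"
  shows "f (a + b) c = f a c + f b c" "f a (b + c) = f a b + f a c"
    "f (a - b) c = f a c - f b c" "f a (b - c) = f a b - f a c"
    "f (sc k a) c = sc k (f a c)" "f a (sc k c) = sc k (f a c)"
proof -
  have right: "module_hom sc sc (f a)" for a
    using assms by (simp add: bilinear_map_def module_hom_iff_linear)
  have left: "module_hom sc sc (\<lambda>x. f x c)" for c
    using assms by (simp add: bilinear_map_def module_hom_iff_linear)
  show "f (a + b) c = f a c + f b c" using module_hom.add[OF left] by simp
  show "f a (b + c) = f a b + f a c" using module_hom.add[OF right] by simp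
  show "f (a - b) c = f a c - f b c" using module_hom.diff[OF left] by simp
  show "f a (b - c) = f a b - f a c" using module_hom.diff[OF right] by simp
  show "f (sc k a) c = sc k (f a c)" using module_hom.scale[OF left] by simp
  show "f a (sc k c) = sc k (f a c)" using module_hom.scale[OF right] by simp
qed

lemma twelve_div_four:
  assumes "(2::'a::field) \<noteq> 0"
  shows "(12::'a) / 4 = 3"
proof -
  have "(4::'a) \<noteq> 0"
    using assms by (metis mult_2_right mult_eq_0_iff numeral_Bit0)
  then show ?thesis
    by (simp add: field_simps)
qed

lemma (in vector_space) scale_three: "scale 3 x = x + x + x"
proof -
  have "scale 3 x = scale (1 + 1 + 1) x" by simp
  then show ?thesis by (simp only: scale_left_distrib scale_one)
qed

lemma deltaH_sym_part_eq_delta2P: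
  fixes sc :: "'k::field \<Rightarrow> 'v::ab_group_add \<Rightarrow> 'v"
  assumes "vector_space sc" and "(2::'k) \<noteq> 0"
    and "bilinear_map sc m" and "bilinear_map sc \<phi>"
  shows "sc 12 (deltaH (pjordan sc m) (sym_part sc \<phi>) X Y Z) =
    delta2P sc m \<phi> X Y Z + delta2P sc m \<phi> X Z Y - delta2P sc m \<phi> Z X Y - delta2P sc m \<phi> Z Y X"
proof -
  interpret vector_space sc by fact
  show ?thesis
    unfolding deltaH_def delta2P_def pjordan_def sym_part_def
    by (simp add: bilinear_map_distribs[OF assms(3)] bilinear_map_distribs[OF assms(4)]
        scale_right_distrib scale_right_diff_distrib algebra_simps
        twelve_div_four[OF assms(2)] scale_three)
qed

lemma deltaC_skew_part_eq_delta2P: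
  fixes sc :: "'k::field \<Rightarrow> 'v::ab_group_add \<Rightarrow> 'v"
  assumes "vector_space sc" and "(2::'k) \<noteq> 0"
    and "bilinear_map sc m" and "bilinear_map sc \<phi>"
  shows "sc 12 (deltaC (pbracket sc m) (skew_part sc \<phi>) X Y Z) =
    delta2P sc m \<phi> X Y Z - delta2P sc m \<phi> X Z Y - delta2P sc m \<phi> Y X Z
    + delta2P sc m \<phi> Y Z X + delta2P sc m \<phi> Z X Y - delta2P sc m \<phi> Z Y X"
proof -
  interpret vector_space sc by fact
  show ?thesis
    unfolding deltaC_def delta2P_def pbracket_def skew_part_def
    by (simp add: bilinear_map_distribs[OF assms(3)] bilinear_map_distribs[OF assms(4)]
        scale_right_distrib scale_right_diff_distrib algebra_simps
        twelve_div_four[OF assms(2)] scale_three)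
qed

theorem mainTheorem16:
  fixes sc :: "'k::field \<Rightarrow> 'v::ab_group_add \<Rightarrow> 'v"
    and m \<phi> :: "'v \<Rightarrow> 'v \<Rightarrow> 'v"
  assumes "vector_space sc"
    and "(2::'k) \<noteq> 0" and "(3::'k) \<noteq> 0"
    and "admissible_poisson sc m"
    and "bilinear_map sc \<phi>"
    and "\<forall>X Y Z. delta2P sc m \<phi> X Y Z = 0"
  shows "(\<forall>X Y Z. deltaH (pjordan sc m) (sym_part sc \<phi>) X Y Z = 0) \<and>
         (\<forall>X Y Z. deltaC (pbracket sc m) (skew_part sc \<phi>) X Y Z = 0)"
proof -
  interpret vector_space sc by fact
  have m_bilinear: "bilinear_map sc m"
    using assms(4) by (simp add: admissible_poisson_def)
  have "(12::'k) \<noteq> 0"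
    using twelve_div_four[OF assms(2)] assms(3) by (metis div_0)
  then have cancel_twelve: "v = 0" if "sc 12 v = 0" for v
    using that by simp
  show ?thesis
    using deltaH_sym_part_eq_delta2P[OF assms(1,2) m_bilinear assms(5)]
      deltaC_skew_part_eq_delta2P[OF assms(1,2) m_bilinear assms(5)]
      assms(6) cancel_twelve
    by simp
qed

end
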